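(* Let $\mathbb{C}$ be a majority category with finite products, $n\geqslant 3$, and $R$ a subobject of $A_1\times A_2\times\cdots\times A_n$. Let $a_k:S\to A_k$ ($k=1,\dots,n$), $x:S\to A_1$, $y:S\to A_2$, $z:S\to A_3$ be morphisms. If $(x,a_2,a_3,\dots,a_n)\in_S R$, $(a_1,y,a_3,\dots,a_n)\in_S R$ and $(a_1,a_2,z,a_4,\dots,a_n)\in_S R$, then $(a_1,a_2,a_3,\dots,a_n)\in_S R$.
   Context: For a morphism $w:S\to W$ and a subobject $A$ of $W$, $w\in_S A$ means $w$ factors through a (any) mono representing $A$. A ternary relation $R\leqslant X\times Y\times Z$ is majority-selecting if for all $S$ and $x,x':S\to X$, $y,y':S\to Y$, $z,z':S\to Z$: $(x,y,z')\in_S R$, $(x,y',z)\in_S R$, $(x',y,z)\in_S R$ imply $(x,y,z)\in_S R$. A category with products is a majority category if every ternary relation (subobject of a product of three objects) is majority-selecting. *)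

theory Defs
  imports Main
begin

text \<open>A category given by explicit data: objects, arrows, domain, codomain,
identities and composition (Comp g f = g after f).\<close>

record ('o, 'a) cat =
  Obj :: "'o set"
  Arr :: "'a set"
  Dom :: "'a \<Rightarrow> 'o"
  Cod :: "'a \<Rightarrow> 'o"
  Id :: "'o \<Rightarrow> 'a"
  Comp :: "'a \<Rightarrow> 'a \<Rightarrow> 'a"

definition hom :: "('o, 'a) cat \<Rightarrow> 'a \<Rightarrow> 'o \<Rightarrow> 'o \<Rightarrow> bool" where
  "hom C f X Y \<longleftrightarrow> f \<in> Arr C \<and> Dom C f = X \<and> Cod C f = Y"

definition category :: "('o, 'a) cat \<Rightarrow> bool" where
  "category C \<longleftrightarrow>
     (\<forall>f \<in> Arr C. Dom C f \<in> Obj C \<and> Cod C f \<in> Obj C) \<and>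
     (\<forall>X \<in> Obj C. hom C (Id C X) X X) \<and>
     (\<forall>f g X Y Z. hom C f X Y \<longrightarrow> hom C g Y Z \<longrightarrow> hom C (Comp C g f) X Z) \<and>
     (\<forall>f X Y. hom C f X Y \<longrightarrow> Comp C f (Id C X) = f \<and> Comp C (Id C Y) f = f) \<and>
     (\<forall>f g h W X Y Z. hom C f W X \<longrightarrow> hom C g X Y \<longrightarrow> hom C h Y Z \<longrightarrow>
        Comp C h (Comp C g f) = Comp C (Comp C h g) f)"

definition is_product :: "('o, 'a) cat \<Rightarrow> 'o list \<Rightarrow> 'o \<Rightarrow> 'a list \<Rightarrow> bool" where
  "is_product C As P ps \<longleftrightarrow>
     P \<in> Obj C \<and> length ps = length As \<and>
     (\<forall>i < length As. hom C (ps ! i) P (As ! i)) \<and>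
     (\<forall>S \<in> Obj C. \<forall>fs. length fs = length As \<longrightarrow>
        (\<forall>i < length As. hom C (fs ! i) S (As ! i)) \<longrightarrow>
        (\<exists>!h. hom C h S P \<and> (\<forall>i < length As. Comp C (ps ! i) h = fs ! i)))"

definition has_finite_products :: "('o, 'a) cat \<Rightarrow> bool" where
  "has_finite_products C \<longleftrightarrow>
     (\<forall>As. set As \<subseteq> Obj C \<longrightarrow> (\<exists>P ps. is_product C As P ps))"

definition tuple :: "('o, 'a) cat \<Rightarrow> 'o \<Rightarrow> 'o \<Rightarrow> 'a list \<Rightarrow> 'a list \<Rightarrow> 'a" where
  "tuple C S P ps fs =
     (THE h. hom C h S P \<and> (\<forall>i < length ps. Comp C (ps ! i) h = fs ! i))"

definition mono :: "('o, 'a) cat \<Rightarrow> 'a \<Rightarrow> bool" where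
  "mono C m \<longleftrightarrow> m \<in> Arr C \<and>
     (\<forall>g h W. hom C g W (Dom C m) \<longrightarrow> hom C h W (Dom C m) \<longrightarrow>
        Comp C m g = Comp C m h \<longrightarrow> g = h)"

text \<open>w \<in>_S A : w factors through the mono m representing the subobject A.\<close>

definition member :: "('o, 'a) cat \<Rightarrow> 'a \<Rightarrow> 'a \<Rightarrow> bool" where
  "member C w m \<longleftrightarrow> (\<exists>u. hom C u (Dom C w) (Dom C m) \<and> Comp C m u = w)"

definition majority_category :: "('o, 'a) cat \<Rightarrow> bool" where
  "majority_category C \<longleftrightarrow> category C \<and> has_finite_products C \<and>
     (\<forall>X Y Z P ps m. X \<in> Obj C \<longrightarrow> Y \<in> Obj C \<longrightarrow> Z \<in> Obj C \<longrightarrow>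
        is_product C [X, Y, Z] P ps \<longrightarrow> mono C m \<longrightarrow> Cod C m = P \<longrightarrow>
        (\<forall>S x x' y y' z z'. S \<in> Obj C \<longrightarrow>
           hom C x S X \<longrightarrow> hom C x' S X \<longrightarrow> hom C y S Y \<longrightarrow> hom C y' S Y \<longrightarrow>
           hom C z S Z \<longrightarrow> hom C z' S Z \<longrightarrow>
           member C (tuple C S P ps [x, y, z']) m \<longrightarrow>
           member C (tuple C S P ps [x, y', z]) m \<longrightarrow>
           member C (tuple C S P ps [x', y, z]) m \<longrightarrow>
           member C (tuple C S P ps [x, y, z]) m))"

end

theory Submission
  imports Defs
begin

text \<open>The product A1 x ... x An embeds monomorphically (indeed isomorphically) into the
ternary product A1 x A2 x (A3 x ... x An) by a regrouping arrow k. Composing the mono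
representing R with k gives a ternary relation, and membership of a generalized element t
in R is equivalent to membership of k o t in this ternary relation. The three hypotheses
become the three premises of the majority property, with the components a3, ..., an
bundled into a single generalized element of A3 x ... x An, and the conclusion transfers
back along k.\<close>

lemma hom_comp:
  "category C \<Longrightarrow> hom C f X Y \<Longrightarrow> hom C g Y Z \<Longrightarrow> hom C (Comp C g f) X Z"
  unfolding category_def by blast

lemma comp_assoc:
  "category C \<Longrightarrow> hom C f W X \<Longrightarrow> hom C g X Y \<Longrightarrow> hom C h Y Z \<Longrightarrow>
   Comp C h (Comp C g f) = Comp C (Comp C h g) f"
  unfolding category_def by blast

lemma hom_in_Obj: "category C \<Longrightarrow> hom C f X Y \<Longrightarrow> X \<in> Obj C \<and> Y \<in> Obj C"
  unfolding category_def hom_def by blast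

lemma is_product_projections:
  "is_product C As P ps \<Longrightarrow> length ps = length As \<and> (\<forall>i < length As. hom C (ps ! i) P (As ! i))"
  unfolding is_product_def by blast

lemma all_less_length_3: "(\<forall>i < length [a, b, c]. Q i) \<longleftrightarrow> Q 0 \<and> Q 1 \<and> Q 2"
  by (auto simp: less_Suc_eq numeral_2_eq_2)


context
  fixes C :: "('o, 'a) cat" and As P ps S fs
  assumes prod: "is_product C As P ps" and S: "S \<in> Obj C" and len: "length fs = length As"
    and fs: "\<forall>i < length As. hom C (fs ! i) S (As ! i)"
begin

lemma tuple_characterization:
  "hom C (tuple C S P ps fs) S P \<and> (\<forall>i < length As. Comp C (ps ! i) (tuple C S P ps fs) = fs ! i)"
proof -
  have "\<exists>!h. hom C h S P \<and> (\<forall>i < length As. Comp C (ps ! i) h = fs ! i)"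
    using prod S len fs unfolding is_product_def by blast
  then show ?thesis
    unfolding tuple_def is_product_projections[OF prod, THEN conjunct1] by (rule theI')
qed

lemma hom_tuple: "hom C (tuple C S P ps fs) S P"
  using tuple_characterization by blast

lemma comp_proj_tuple: "i < length As \<Longrightarrow> Comp C (ps ! i) (tuple C S P ps fs) = fs ! i"
  using tuple_characterization by blast

lemma tuple_unique:
  assumes "hom C h S P" "\<forall>i < length As. Comp C (ps ! i) h = fs ! i"
  shows "h = tuple C S P ps fs"
proof -
  have "\<exists>!h. hom C h S P \<and> (\<forall>i < length As. Comp C (ps ! i) h = fs ! i)"
    using prod S len fs unfolding is_product_def by blast
  then show ?thesis using tuple_characterization assms by blast
qed

lemma map_comp_tuple_projections: "map (\<lambda>p. Comp C p (tuple C S P ps fs)) ps = fs"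
  using is_product_projections[OF prod] len comp_proj_tuple by (simp add: list_eq_iff_nth_eq)

end

lemma tuple_comp:
  assumes C: "category C" and prod: "is_product C As P ps" and t: "hom C t S T"
    and len: "length gs = length As" and gs: "\<forall>i < length As. hom C (gs ! i) T (As ! i)"
  shows "Comp C (tuple C T P ps gs) t = tuple C S P ps (map (\<lambda>g. Comp C g t) gs)"
proof (rule tuple_unique[OF prod])
  have T: "T \<in> Obj C" using hom_in_Obj[OF C t] by blast
  note tup = hom_tuple[OF prod T len gs] comp_proj_tuple[OF prod T len gs]
  show "S \<in> Obj C" using hom_in_Obj[OF C t] by blast
  show "length (map (\<lambda>g. Comp C g t) gs) = length As" using len by simp
  show "\<forall>i < length As. hom C (map (\<lambda>g. Comp C g t) gs ! i) S (As ! i)"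
    using gs len hom_comp[OF C t] by simp
  show "hom C (Comp C (tuple C T P ps gs) t) S P" using hom_comp[OF C t tup(1)] .
  show "\<forall>i < length As. Comp C (ps ! i) (Comp C (tuple C T P ps gs) t) = map (\<lambda>g. Comp C g t) gs ! i"
  proof (intro allI impI)
    fix i assume i: "i < length As"
    have "Comp C (ps ! i) (Comp C (tuple C T P ps gs) t) = Comp C (Comp C (ps ! i) (tuple C T P ps gs)) t"
      using comp_assoc[OF C t tup(1)] is_product_projections[OF prod] i by blast
    then show "Comp C (ps ! i) (Comp C (tuple C T P ps gs) t) = map (\<lambda>g. Comp C g t) gs ! i"
      using tup(2)[OF i] i len by simp
  qed
qed

lemma product_arrow_eqI:
  assumes C: "category C" and prod: "is_product C As P ps" and "hom C g S P" "hom C h S P"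
    and "\<forall>i < length As. Comp C (ps ! i) g = Comp C (ps ! i) h"
  shows "g = h"
proof -
  have S: "S \<in> Obj C" using hom_in_Obj[OF C assms(3)] by blast
  define fs where "fs = map (\<lambda>p. Comp C p g) ps"
  have len: "length fs = length As" and fs: "\<forall>i < length As. hom C (fs ! i) S (As ! i)"
    using is_product_projections[OF prod] hom_comp[OF C assms(3)] by (auto simp: fs_def)
  have "g = tuple C S P ps fs"
    using tuple_unique[OF prod S len fs] assms(3) is_product_projections[OF prod] by (simp add: fs_def)
  moreover have "h = tuple C S P ps fs"
    using tuple_unique[OF prod S len fs] assms(4,5) is_product_projections[OF prod] by (simp add: fs_def)
  ultimately show ?thesis by simp
qed


lemma mono_if_projections_factor:
  assumes C: "category C" and prod: "is_product C As P ps" and k: "hom C k P P'"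
    and factor: "\<forall>i < length As. \<exists>g. hom C g P' (As ! i) \<and> ps ! i = Comp C g k"
  shows "mono C k"
  unfolding mono_def
proof (intro conjI allI impI)
  show "k \<in> Arr C" using k unfolding hom_def by blast
  fix g h W assume "hom C g W (Dom C k)" "hom C h W (Dom C k)" and eq: "Comp C k g = Comp C k h"
  then have g: "hom C g W P" and h: "hom C h W P" using k unfolding hom_def by auto
  show "g = h"
  proof (rule product_arrow_eqI[OF C prod g h], intro allI impI)
    fix i assume "i < length As"
    then obtain q where q: "hom C q P' (As ! i)" "ps ! i = Comp C q k" using factor by blast
    show "Comp C (ps ! i) g = Comp C (ps ! i) h"
      using comp_assoc[OF C g k q(1)] comp_assoc[OF C h k q(1)] eq q(2) by simp
  qed
qed

lemma mono_cancel:
  "mono C k \<Longrightarrow> hom C k P P' \<Longrightarrow> hom C g W P \<Longrightarrow> hom C h W P \<Longrightarrow>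
   Comp C k g = Comp C k h \<Longrightarrow> g = h"
  unfolding mono_def hom_def by blast

lemma mono_comp:
  assumes C: "category C" and "mono C m" "mono C k" "hom C m D P" "hom C k P P'"
  shows "mono C (Comp C k m)"
  unfolding mono_def
proof (intro conjI allI impI)
  show "Comp C k m \<in> Arr C" using hom_comp[OF C assms(4,5)] unfolding hom_def by blast
  fix g h W
  assume "hom C g W (Dom C (Comp C k m))" "hom C h W (Dom C (Comp C k m))"
    and eq: "Comp C (Comp C k m) g = Comp C (Comp C k m) h"
  then have g: "hom C g W D" and h: "hom C h W D"
    using hom_comp[OF C assms(4,5)] unfolding hom_def by auto
  have "Comp C k (Comp C m g) = Comp C k (Comp C m h)"
    using eq comp_assoc[OF C g assms(4,5)] comp_assoc[OF C h assms(4,5)] by simp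
  then have "Comp C m g = Comp C m h"
    by (rule mono_cancel[OF assms(3,5) hom_comp[OF C g assms(4)] hom_comp[OF C h assms(4)]])
  then show "g = h" by (rule mono_cancel[OF assms(2,4) g h])
qed

lemma member_comp_mono_iff:
  assumes C: "category C" and k: "mono C k" "hom C k P P'" and m: "hom C m D P" and t: "hom C t S P"
  shows "member C (Comp C k t) (Comp C k m) \<longleftrightarrow> member C t m"
proof -
  have doms: "Dom C (Comp C k t) = S" "Dom C (Comp C k m) = D" "Dom C t = S" "Dom C m = D"
    using hom_comp[OF C t k(2)] hom_comp[OF C m k(2)] t m unfolding hom_def by auto
  have "Comp C (Comp C k m) u = Comp C k t \<longleftrightarrow> Comp C m u = t" if u: "hom C u S D" for u
  proof
    assume "Comp C (Comp C k m) u = Comp C k t"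
    then have "Comp C k (Comp C m u) = Comp C k t" using comp_assoc[OF C u m k(2)] by simp
    then show "Comp C m u = t" by (rule mono_cancel[OF k hom_comp[OF C u m] t])
  qed (use comp_assoc[OF C u m k(2)] in simp)
  then show ?thesis unfolding member_def doms by blast
qed


lemma product_regroup:
  assumes C: "category C" and "2 \<le> length As"
    and prodP: "is_product C As P ps" and prodQ: "is_product C (drop 2 As) Q qs"
    and prodP': "is_product C [As ! 0, As ! 1, Q] P' ps'" and P: "P \<in> Obj C"
  obtains k where "hom C k P P'" "mono C k"
    "\<And>S fs. S \<in> Obj C \<Longrightarrow> length fs = length As \<Longrightarrow> \<forall>i < length As. hom C (fs ! i) S (As ! i) \<Longrightarrow>
       Comp C k (tuple C S P ps fs) = tuple C S P' ps' [fs ! 0, fs ! 1, tuple C S Q qs (drop 2 fs)]"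
proof -
  have len01: "0 < length As" "1 < length As" using assms(2) by auto
  obtain lps: "length ps = length As" and psh: "\<forall>i < length As. hom C (ps ! i) P (As ! i)"
    using is_product_projections[OF prodP] by blast
  have qsh: "\<forall>i < length As - 2. hom C (qs ! i) Q (As ! (i + 2))"
    using is_product_projections[OF prodQ] assms(2) by (auto simp: add.commute)
  have ps'h: "hom C (ps' ! 0) P' (As ! 0)" "hom C (ps' ! 1) P' (As ! 1)" "hom C (ps' ! 2) P' Q"
    using is_product_projections[OF prodP'] unfolding all_less_length_3 by auto
  have drop_ps: "length (drop 2 ps) = length (drop 2 As)"
    "\<forall>i < length (drop 2 As). hom C (drop 2 ps ! i) P (drop 2 As ! i)"
    using lps psh by auto
  define r where "r = tuple C P Q qs (drop 2 ps)"
  note r = hom_tuple[OF prodQ P drop_ps, folded r_def] comp_proj_tuple[OF prodQ P drop_ps, folded r_def]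
  have k_comps: "\<forall>i < length [As ! 0, As ! 1, Q]. hom C ([ps ! 0, ps ! 1, r] ! i) P ([As ! 0, As ! 1, Q] ! i)"
    unfolding all_less_length_3 using psh len01 r(1) by simp
  define k where "k = tuple C P P' ps' [ps ! 0, ps ! 1, r]"
  have k_len: "length [ps ! 0, ps ! 1, r] = length [As ! 0, As ! 1, Q]" by simp
  note k = hom_tuple[OF prodP' P k_len k_comps, folded k_def]
    comp_proj_tuple[OF prodP' P k_len k_comps, folded k_def]
  show ?thesis
  proof
    show "hom C k P P'" using k(1) .
    have "\<exists>g. hom C g P' (As ! i) \<and> ps ! i = Comp C g k" if i: "i < length As" for i
    proof (cases "i < 2")
      case True
      then show ?thesis using ps'h k(2)[of 0] k(2)[of 1] by (cases i) (auto intro!: exI)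
    next
      case False
      define j where "j = i - 2"
      have j: "j < length As - 2" "i = j + 2" using False i by (auto simp: j_def)
      have "ps ! i = Comp C (qs ! j) (Comp C (ps' ! 2) k)" using r(2) k(2)[of 2] j lps by auto
      also have "\<dots> = Comp C (Comp C (qs ! j) (ps' ! 2)) k"
        using comp_assoc[OF C k(1) ps'h(3)] qsh j(1) by blast
      finally show ?thesis using hom_comp[OF C ps'h(3)] qsh j by auto
    qed
    then show "mono C k" using mono_if_projections_factor[OF C prodP k(1)] by blast
  next
    fix S fs assume S: "S \<in> Obj C" and len: "length fs = length As"
      and fs: "\<forall>i < length As. hom C (fs ! i) S (As ! i)"
    let ?t = "tuple C S P ps fs"
    have t: "hom C ?t S P" using hom_tuple[OF prodP S len fs] .
    have proj_t: "map (\<lambda>p. Comp C p ?t) ps = fs" using map_comp_tuple_projections[OF prodP S len fs] .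
    have "Comp C r ?t = tuple C S Q qs (map (\<lambda>p. Comp C p ?t) (drop 2 ps))"
      unfolding r_def using tuple_comp[OF C prodQ t drop_ps] .
    also have "\<dots> = tuple C S Q qs (drop 2 fs)" by (simp add: drop_map[symmetric] proj_t)
    finally have rt: "Comp C r ?t = tuple C S Q qs (drop 2 fs)" .
    have "Comp C k ?t = tuple C S P' ps' (map (\<lambda>g. Comp C g ?t) [ps ! 0, ps ! 1, r])"
      unfolding k_def using tuple_comp[OF C prodP' t _ k_comps] by simp
    then show "Comp C k ?t = tuple C S P' ps' [fs ! 0, fs ! 1, tuple C S Q qs (drop 2 fs)]"
      using comp_proj_tuple[OF prodP S len fs] len01 rt by simp
  qed
qed

lemma relation_regroup_as_ternary:
  assumes C: "category C" and products: "has_finite_products C" and "2 \<le> length As"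
    and "set As \<subseteq> Obj C" and prodP: "is_product C As P ps" and m: "mono C m" "Cod C m = P"
  obtains Q qs P' ps' R where "is_product C (drop 2 As) Q qs" "is_product C [As ! 0, As ! 1, Q] P' ps'"
    "mono C R" "Cod C R = P'"
    "\<And>S fs. S \<in> Obj C \<Longrightarrow> length fs = length As \<Longrightarrow> \<forall>i < length As. hom C (fs ! i) S (As ! i) \<Longrightarrow>
       member C (tuple C S P ps fs) m \<longleftrightarrow>
       member C (tuple C S P' ps' [fs ! 0, fs ! 1, tuple C S Q qs (drop 2 fs)]) R"
proof -
  have P: "P \<in> Obj C" using prodP unfolding is_product_def by blast
  have "0 < length As" "1 < length As" using assms(3) by auto
  then have A01: "As ! 0 \<in> Obj C" "As ! 1 \<in> Obj C" using nth_mem assms(4) by blast+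
  obtain Q qs where prodQ: "is_product C (drop 2 As) Q qs"
    using products assms(4) set_drop_subset unfolding has_finite_products_def by (meson order_trans)
  have Q: "Q \<in> Obj C" using prodQ unfolding is_product_def by blast
  obtain P' ps' where prodP': "is_product C [As ! 0, As ! 1, Q] P' ps'"
    using products A01 Q unfolding has_finite_products_def by (metis empty_subsetI insert_subset list.set)
  obtain k where k: "hom C k P P'" "mono C k"
    and regroup: "\<And>S fs. S \<in> Obj C \<Longrightarrow> length fs = length As \<Longrightarrow>
      \<forall>i < length As. hom C (fs ! i) S (As ! i) \<Longrightarrow>
      Comp C k (tuple C S P ps fs) = tuple C S P' ps' [fs ! 0, fs ! 1, tuple C S Q qs (drop 2 fs)]"
    using product_regroup[OF C assms(3) prodP prodQ prodP' P] by blast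
  have m_hom: "hom C m (Dom C m) P" using m unfolding mono_def hom_def by blast
  show ?thesis
  proof
    show "is_product C (drop 2 As) Q qs" "is_product C [As ! 0, As ! 1, Q] P' ps'" using prodQ prodP' .
    show "mono C (Comp C k m)" using mono_comp[OF C m(1) k(2) m_hom k(1)] .
    show "Cod C (Comp C k m) = P'" using hom_comp[OF C m_hom k(1)] unfolding hom_def by blast
    fix S fs assume S: "S \<in> Obj C" and fs: "length fs = length As" "\<forall>i < length As. hom C (fs ! i) S (As ! i)"
    show "member C (tuple C S P ps fs) m \<longleftrightarrow>
        member C (tuple C S P' ps' [fs ! 0, fs ! 1, tuple C S Q qs (drop 2 fs)]) (Comp C k m)"
      using member_comp_mono_iff[OF C k(2,1) m_hom hom_tuple[OF prodP S fs]] regroup[OF S fs] by simp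
  qed
qed

lemma majority_categoryD:
  assumes "majority_category C" "X \<in> Obj C" "Y \<in> Obj C" "Z \<in> Obj C"
    and "is_product C [X, Y, Z] P ps" "mono C m" "Cod C m = P" "S \<in> Obj C"
    and "hom C x S X" "hom C x' S X" "hom C y S Y" "hom C y' S Y" "hom C z S Z" "hom C z' S Z"
    and "member C (tuple C S P ps [x, y, z']) m" "member C (tuple C S P ps [x, y', z]) m"
    "member C (tuple C S P ps [x', y, z]) m"
  shows "member C (tuple C S P ps [x, y, z]) m"
  using assms unfolding majority_category_def by blast

theorem lemma5p6:
  fixes C :: "('o, 'a) cat"
    and As :: "'o list" and P :: 'o and ps :: "'a list" and m :: 'a
    and S :: 'o and as :: "'a list" and x y z :: 'a and n :: nat
  assumes "majority_category C"
    and "has_finite_products C"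
    and "n \<ge> 3" and "length As = n" and "set As \<subseteq> Obj C"
    and "is_product C As P ps"
    and "mono C m" and "Cod C m = P"
    and "S \<in> Obj C" and "length as = n"
    and "\<forall>k < n. hom C (as ! k) S (As ! k)"
    and "hom C x S (As ! 0)" and "hom C y S (As ! 1)" and "hom C z S (As ! 2)"
    and "member C (tuple C S P ps (as[0 := x])) m"
    and "member C (tuple C S P ps (as[1 := y])) m"
    and "member C (tuple C S P ps (as[2 := z])) m"
  shows "member C (tuple C S P ps as) m"
proof -
  have C: "category C" using assms(1) unfolding majority_category_def by blast
  have "2 \<le> length As" using assms(3,4) by simp
  then obtain Q qs P' ps' R where prodQ: "is_product C (drop 2 As) Q qs"
    and prodP': "is_product C [As ! 0, As ! 1, Q] P' ps'" and R: "mono C R" "Cod C R = P'"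
    and regroup: "\<And>S fs. S \<in> Obj C \<Longrightarrow> length fs = length As \<Longrightarrow>
      \<forall>i < length As. hom C (fs ! i) S (As ! i) \<Longrightarrow>
      member C (tuple C S P ps fs) m \<longleftrightarrow>
      member C (tuple C S P' ps' [fs ! 0, fs ! 1, tuple C S Q qs (drop 2 fs)]) R"
    using relation_regroup_as_ternary[OF C assms(2) _ assms(5-8)] by blast
  note transfer = regroup[OF assms(9), unfolded assms(4)]
  have A: "As ! 0 \<in> Obj C" "As ! 1 \<in> Obj C" "Q \<in> Obj C"
    using assms(3-5) prodQ nth_mem[of 0 As] nth_mem[of 1 As]
    by (auto simp del: nth_mem simp: is_product_def)
  have n: "0 < n" "1 < n" "2 < n" using assms(3) by auto
  have upd: "\<forall>i < n. hom C (as[j := v] ! i) S (As ! i)" if "j < n" "hom C v S (As ! j)" for j v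
    using that assms(10,11) by (auto simp: nth_list_update)
  let ?w = "tuple C S Q qs (drop 2 as)" and ?w' = "tuple C S Q qs (drop 2 (as[2 := z]))"
  have w: "hom C ?w S Q" "hom C ?w' S Q"
    using hom_tuple[OF prodQ assms(9)] assms(4,10,11) upd[OF n(3) assms(14)] by simp_all
  have "member C (tuple C S P' ps' [as ! 0, as ! 1, ?w]) R"
  proof (rule majority_categoryD[OF assms(1) A prodP' R assms(9)])
    show "member C (tuple C S P' ps' [as ! 0, as ! 1, ?w']) R"
      using transfer[OF _ upd[OF n(3) assms(14)]] assms(3,10,17) by simp
    show "member C (tuple C S P' ps' [as ! 0, y, ?w]) R"
      using transfer[OF _ upd[OF n(2) assms(13)]] assms(3,10,16) by (simp add: drop_update_cancel)
    show "member C (tuple C S P' ps' [x, as ! 1, ?w]) R"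
      using transfer[OF _ upd[OF n(1) assms(12)]] assms(3,10,15) by (simp add: drop_update_cancel)
  qed (use assms(3,11-13) w in auto)
  then show ?thesis using transfer assms(10,11) by simp
qed

end
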